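(* Let $\alpha\in(0,1)$, $0\le\gamma\le 1/\alpha$, $n_0,n\in\mathbb N$ with $n_0\le n$. Let $\xi_1,\dots,\xi_{n_0}$ be i.i.d. random variables with values in $[0,1]$ and c.d.f. $F_\xi$ satisfying $F_\xi(t)=\gamma t$ for all $t\in[0,\alpha]$, and let $\xi_{n_0+1},\dots,\xi_n$ be random variables with values in $[0,1]$, independent of $(\xi_1,\dots,\xi_{n_0})$. For $c_i=i\alpha/n$, $i=1,\dots,n$, let $R'_n=\max\{k\le n:\xi_{k:n}\le c_k\}$ (with $R'_n=-\infty$ if this set is empty) and $V'_n=|\{i\in\{1,\dots,n_0\}:\xi_i\le c_{R'_n}\}|$, where $c_{-\infty}=-\infty$. Then \[ \mathbb E\Big(\frac{V'_n}{R'_n\vee 1}\Big)=\frac{n_0}{n}\gamma\alpha. \]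
   Context: $\xi_{1:n}\le\dots\le\xi_{n:n}$ denote the order statistics of $\xi_1,\dots,\xi_n$. *)

theory Defs
  imports "HOL-Probability.Probability"
begin

definition order_stat :: "(nat \<Rightarrow> real) \<Rightarrow> nat \<Rightarrow> nat \<Rightarrow> real" where
  "order_stat x n k = sort (map x [1..<Suc n]) ! (k - 1)"

definition crit :: "real \<Rightarrow> nat \<Rightarrow> nat \<Rightarrow> real" where
  "crit \<alpha> n i = real i * \<alpha> / real n"

text \<open>R'_n = max {k <= n. x_(k:n) <= c_k}; the value 0 encodes -infinity (empty set).\<close>
definition stepup_R :: "real \<Rightarrow> nat \<Rightarrow> (nat \<Rightarrow> real) \<Rightarrow> nat" where
  "stepup_R \<alpha> n x =
     (if \<exists>k\<in>{1..n}. order_stat x n k \<le> crit \<alpha> n k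
      then Max {k\<in>{1..n}. order_stat x n k \<le> crit \<alpha> n k} else 0)"

text \<open>V'_n = #{i in 1..n0. x i <= c_{R'_n}}, with c_{-infinity} = -infinity (so V'=0 then).\<close>
definition stepup_V :: "real \<Rightarrow> nat \<Rightarrow> nat \<Rightarrow> (nat \<Rightarrow> real) \<Rightarrow> nat" where
  "stepup_V \<alpha> n0 n x =
     card {i\<in>{1..n0}. stepup_R \<alpha> n x \<noteq> 0 \<and> x i \<le> crit \<alpha> n (stepup_R \<alpha> n x)}"

end

theory Submission
  imports Defs
begin

(*
  For a true null hypothesis i, let R_i be the number of rejections of the step-up procedure
  after \<xi>_i is replaced by 0. Hypothesis i is rejected iff \<xi>_i \<le> c_{R_i}, and then R = R_i,
  so V / max R 1 = \<Sum>_i [\<xi>_i \<le> c_{R_i}] / R_i. Since R_i depends only on the other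
  observations it is independent of \<xi>_i, and because c_k / k = \<alpha> / n every summand has
  expectation \<Sum>_k P(R_i = k) \<gamma> c_k / k = \<gamma> \<alpha> / n. Only the c.d.f. on [0, \<alpha>] and the
  independence structure are used.
*)

definition count_le :: "nat \<Rightarrow> (nat \<Rightarrow> real) \<Rightarrow> real \<Rightarrow> nat" where
  "count_le n x t = card {j\<in>{1..n}. x j \<le> t}"

(* The set {k. \<xi>_{k:n} \<le> c_k} of the step-up procedure, described without sorting
   (see order_stat_le_iff). *)
definition stepup_set :: "real \<Rightarrow> nat \<Rightarrow> (nat \<Rightarrow> real) \<Rightarrow> nat set" where
  "stepup_set \<alpha> n x = {k\<in>{1..n}. k \<le> count_le n x (crit \<alpha> n k)}"

lemma sorted_nth_le_iff_card:
  fixes ys :: "'a::linorder list"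
  assumes "sorted ys" "k \<in> {1..length ys}"
  shows "ys ! (k - 1) \<le> t \<longleftrightarrow> k \<le> card {j. j < length ys \<and> ys ! j \<le> t}"
proof
  assume "ys ! (k - 1) \<le> t"
  with assms have "{0..<k} \<subseteq> {j. j < length ys \<and> ys ! j \<le> t}"
    by (force intro: order_trans[OF sorted_nth_mono[of ys _ "k - 1"]])
  then show "k \<le> card {j. j < length ys \<and> ys ! j \<le> t}"
    by (metis card_atLeastLessThan card_mono finite_Collect_conjI finite_Collect_less_nat diff_zero)
next
  assume k: "k \<le> card {j. j < length ys \<and> ys ! j \<le> t}"
  show "ys ! (k - 1) \<le> t"
  proof (rule ccontr)
    assume above: "\<not> ys ! (k - 1) \<le> t"
    have "{j. j < length ys \<and> ys ! j \<le> t} \<subseteq> {0..<k - 1}"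
    proof
      fix j assume j: "j \<in> {j. j < length ys \<and> ys ! j \<le> t}"
      have "\<not> k - 1 \<le> j"
        using sorted_nth_mono[OF assms(1), of "k - 1" j] j above by auto
      then show "j \<in> {0..<k - 1}" by simp
    qed
    then have "card {j. j < length ys \<and> ys ! j \<le> t} \<le> card {0..<k - 1}"
      by (intro card_mono) simp_all
    with k assms(2) show False by auto
  qed
qed

lemma order_stat_le_iff:
  assumes "k \<in> {1..n}"
  shows "order_stat x n k \<le> t \<longleftrightarrow> k \<le> count_le n x t"
proof -
  define ys where "ys = sort (map x [1..<Suc n])"
  have "card {j. j < length ys \<and> ys ! j \<le> t} = length (filter (\<lambda>v. v \<le> t) ys)"
    by (simp add: length_filter_conv_card)
  also have "\<dots> = length (filter (\<lambda>v. v \<le> t) (map x [1..<Suc n]))"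
    unfolding ys_def by (metis mset_filter mset_sort size_mset)
  also have "\<dots> = length (filter (\<lambda>j. x j \<le> t) [1..<Suc n])"
    by (simp add: filter_map comp_def)
  also have "\<dots> = count_le n x t"
    unfolding count_le_def by (subst distinct_length_filter) (auto intro!: arg_cong[where f=card])
  finally show ?thesis
    using assms sorted_nth_le_iff_card[of ys k t]
    by (simp add: order_stat_def ys_def[symmetric]) (simp add: ys_def)
qed

lemma finite_stepup_set [simp]: "finite (stepup_set \<alpha> n x)"
  by (simp add: stepup_set_def)

lemma stepup_set_subset: "stepup_set \<alpha> n x \<subseteq> {1..n}"
  by (auto simp: stepup_set_def)

lemma stepup_R_eq_Max:
  "stepup_R \<alpha> n x = (if stepup_set \<alpha> n x = {} then 0 else Max (stepup_set \<alpha> n x))"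
proof -
  have "{k\<in>{1..n}. order_stat x n k \<le> crit \<alpha> n k} = stepup_set \<alpha> n x"
    unfolding stepup_set_def using order_stat_le_iff by blast
  then show ?thesis
    unfolding stepup_R_def by (metis (no_types, lifting) empty_Collect_eq)
qed

lemma stepup_R_eq_iff:
  "stepup_R \<alpha> n x = k \<longleftrightarrow>
     stepup_set \<alpha> n x = {} \<and> k = 0 \<or>
     k \<in> stepup_set \<alpha> n x \<and> (\<forall>m\<in>stepup_set \<alpha> n x. m \<le> k)"
  by (auto simp: stepup_R_eq_Max intro!: Max_eqI Max_in)

lemma stepup_R_in_stepup_set:
  "stepup_R \<alpha> n x \<noteq> 0 \<Longrightarrow> stepup_R \<alpha> n x \<in> stepup_set \<alpha> n x"
  by (simp add: stepup_R_eq_Max split: if_splits)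

lemma le_stepup_R: "k \<in> stepup_set \<alpha> n x \<Longrightarrow> k \<le> stepup_R \<alpha> n x"
  by (auto simp: stepup_R_eq_Max)

lemma stepup_R_cong:
  "(\<And>j. j \<in> {1..n} \<Longrightarrow> x j = y j) \<Longrightarrow> stepup_R \<alpha> n x = stepup_R \<alpha> n y"
  unfolding stepup_R_eq_Max stepup_set_def count_le_def by (simp cong: conj_cong)

lemma crit_nonneg: "0 \<le> \<alpha> \<Longrightarrow> 0 \<le> crit \<alpha> n k"
  by (simp add: crit_def)

lemma crit_mono: "0 \<le> \<alpha> \<Longrightarrow> k \<le> l \<Longrightarrow> crit \<alpha> n k \<le> crit \<alpha> n l"
  by (simp add: crit_def divide_right_mono mult_right_mono)

lemma crit_div: "k \<noteq> 0 \<Longrightarrow> crit \<alpha> n k / real k = \<alpha> / real n"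
  by (simp add: crit_def)

lemma count_le_le_fun_upd_zero: "0 \<le> t \<Longrightarrow> count_le n x t \<le> count_le n (x(i := 0)) t"
  unfolding count_le_def by (intro card_mono) auto

lemma count_le_fun_upd_zero:
  "0 \<le> t \<Longrightarrow> x i \<le> t \<Longrightarrow> count_le n (x(i := 0)) t = count_le n x t"
  unfolding count_le_def by (intro arg_cong[where f=card]) auto

lemma stepup_R_le_fun_upd_zero:
  assumes "0 \<le> \<alpha>"
  shows "stepup_R \<alpha> n x \<le> stepup_R \<alpha> n (x(i := 0))"
proof -
  have "stepup_set \<alpha> n x \<subseteq> stepup_set \<alpha> n (x(i := 0))"
    unfolding stepup_set_def
    using count_le_le_fun_upd_zero[OF crit_nonneg[OF assms]] by (auto intro: order_trans)
  then show ?thesis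
    by (metis le_stepup_R stepup_R_in_stepup_set subset_iff zero_le)
qed

lemma stepup_R_fun_upd_zero_in:
  assumes "0 \<le> \<alpha>" "i \<in> {1..n}"
  shows "stepup_R \<alpha> n (x(i := 0)) \<in> {1..n}"
proof -
  have "{i} \<subseteq> {j\<in>{1..n}. (x(i := 0)) j \<le> crit \<alpha> n 1}"
    using assms crit_nonneg[OF assms(1)] by auto
  then have "1 \<in> stepup_set \<alpha> n (x(i := 0))"
    using assms(2) card_mono[of _ "{i}"] by (force simp: stepup_set_def count_le_def)
  then show ?thesis
    using le_stepup_R stepup_R_in_stepup_set stepup_set_subset
    by (metis not_one_le_zero subset_iff)
qed

lemma stepup_rejects_iff_fun_upd_zero:
  assumes "0 \<le> \<alpha>" "i \<in> {1..n}"
  shows "stepup_R \<alpha> n x \<noteq> 0 \<and> x i \<le> crit \<alpha> n (stepup_R \<alpha> n x) \<longleftrightarrow>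
           x i \<le> crit \<alpha> n (stepup_R \<alpha> n (x(i := 0)))"
    and "stepup_R \<alpha> n x \<noteq> 0 \<Longrightarrow> x i \<le> crit \<alpha> n (stepup_R \<alpha> n x) \<Longrightarrow>
           stepup_R \<alpha> n x = stepup_R \<alpha> n (x(i := 0))"
proof -
  let ?rejected = "stepup_R \<alpha> n x \<noteq> 0 \<and> x i \<le> crit \<alpha> n (stepup_R \<alpha> n x)"
  let ?r = "stepup_R \<alpha> n x" and ?r' = "stepup_R \<alpha> n (x(i := 0))"
  have r_le: "?r \<le> ?r'" by (rule stepup_R_le_fun_upd_zero[OF assms(1)])
  have r'_in: "?r' \<in> {1..n}" by (rule stepup_R_fun_upd_zero_in[OF assms])
  have r'_le: "?r' \<le> ?r" if "x i \<le> crit \<alpha> n ?r'"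
  proof -
    have "?r' \<in> stepup_set \<alpha> n (x(i := 0))"
      using r'_in stepup_R_in_stepup_set by simp
    then have "?r' \<in> stepup_set \<alpha> n x"
      using count_le_fun_upd_zero[where x=x and i=i, OF crit_nonneg[OF assms(1)] that]
      by (simp add: stepup_set_def)
    then show ?thesis by (rule le_stepup_R)
  qed
  have "x i \<le> crit \<alpha> n ?r'" if ?rejected
    using that crit_mono[OF assms(1) r_le, where n=n] by (auto intro: order_trans)
  moreover have "?rejected" if "x i \<le> crit \<alpha> n ?r'"
    using that r'_le r_le r'_in by (simp add: le_antisym)
  ultimately show "?rejected \<longleftrightarrow> x i \<le> crit \<alpha> n ?r'" by blast
  show "?r \<noteq> 0 \<Longrightarrow> x i \<le> crit \<alpha> n ?r \<Longrightarrow> ?r = ?r'"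
    using r_le r'_le \<open>?rejected \<Longrightarrow> x i \<le> crit \<alpha> n ?r'\<close> by (simp add: le_antisym)
qed

lemma stepup_V_div_eq_sum:
  assumes "0 \<le> \<alpha>" "n0 \<le> n"
  shows "real (stepup_V \<alpha> n0 n x) / real (max (stepup_R \<alpha> n x) 1)
    = (\<Sum>i\<in>{1..n0}. of_bool (x i \<le> crit \<alpha> n (stepup_R \<alpha> n (x(i := 0))))
                       / real (stepup_R \<alpha> n (x(i := 0))))"
proof -
  let ?rejected = "\<lambda>i. stepup_R \<alpha> n x \<noteq> 0 \<and> x i \<le> crit \<alpha> n (stepup_R \<alpha> n x)"
  let ?R = "\<lambda>i. stepup_R \<alpha> n (x(i := 0))"
  have "real (stepup_V \<alpha> n0 n x) = (\<Sum>i\<in>{1..n0}. of_bool (?rejected i))"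
    by (simp add: stepup_V_def Int_def conj_commute)
  then have "real (stepup_V \<alpha> n0 n x) / real (max (stepup_R \<alpha> n x) 1)
      = (\<Sum>i\<in>{1..n0}. of_bool (?rejected i) / real (max (stepup_R \<alpha> n x) 1))"
    by (simp only: sum_divide_distrib)
  also have "\<dots> = (\<Sum>i\<in>{1..n0}. of_bool (x i \<le> crit \<alpha> n (?R i)) / real (?R i))"
  proof (rule sum.cong)
    fix i assume "i \<in> {1..n0}"
    then have "i \<in> {1..n}" using assms(2) by auto
    note rejects = stepup_rejects_iff_fun_upd_zero[OF assms(1) this, of x]
    show "of_bool (?rejected i) / real (max (stepup_R \<alpha> n x) 1)
        = of_bool (x i \<le> crit \<alpha> n (?R i)) / real (?R i)"
      by (cases "?rejected i") (use rejects in auto)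
  qed simp
  finally show ?thesis .
qed

lemma real_count_le_eq_sum: "real (count_le n x t) = (\<Sum>j\<in>{1..n}. of_bool (x j \<le> t))"
  by (simp add: count_le_def Int_def conj_commute)

lemma measurable_stepup_R [measurable]:
  assumes x: "\<And>j. j \<in> {1..n} \<Longrightarrow> (\<lambda>\<omega>. x \<omega> j) \<in> borel_measurable N"
  shows "(\<lambda>\<omega>. stepup_R \<alpha> n (x \<omega>)) \<in> N \<rightarrow>\<^sub>M count_space UNIV"
proof -
  have [measurable]: "(\<lambda>\<omega>. \<Sum>j\<in>{1..n}. of_bool (x \<omega> j \<le> t) :: real) \<in> borel_measurable N" for t
  proof (rule borel_measurable_sum)
    fix j assume "j \<in> {1..n}"
    note [measurable] = x[OF this]
    show "(\<lambda>\<omega>. of_bool (x \<omega> j \<le> t) :: real) \<in> borel_measurable N"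
      by measurable
  qed
  have "Measurable.pred N (\<lambda>\<omega>. real k \<le> (\<Sum>j\<in>{1..n}. of_bool (x \<omega> j \<le> t)))" for k t
    by measurable
  then have count: "Measurable.pred N (\<lambda>\<omega>. k \<le> count_le n (x \<omega>) t)" for k t
    by (simp only: real_count_le_eq_sum[symmetric] of_nat_le_iff)
  have member [measurable]: "Measurable.pred N (\<lambda>\<omega>. k \<in> stepup_set \<alpha> n (x \<omega>))" for k
    unfolding stepup_set_def using count by simp
  have "Measurable.pred N (\<lambda>\<omega>. stepup_R \<alpha> n (x \<omega>) = k)" for k
  proof -
    have "stepup_R \<alpha> n y = k \<longleftrightarrow>
        (\<forall>m\<in>{1..n}. m \<notin> stepup_set \<alpha> n y) \<and> k = 0 \<or>
        k \<in> stepup_set \<alpha> n y \<and> (\<forall>m\<in>{1..n}. m \<in> stepup_set \<alpha> n y \<longrightarrow> m \<le> k)" for y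
    proof -
      have "stepup_set \<alpha> n y = {} \<longleftrightarrow> (\<forall>m\<in>{1..n}. m \<notin> stepup_set \<alpha> n y)"
        and "(\<forall>m\<in>stepup_set \<alpha> n y. m \<le> k) \<longleftrightarrow> (\<forall>m\<in>{1..n}. m \<in> stepup_set \<alpha> n y \<longrightarrow> m \<le> k)"
        using stepup_set_subset[of \<alpha> n y] by blast+
      then show ?thesis by (simp only: stepup_R_eq_iff)
    qed
    then show ?thesis
      by (simp only:) measurable
  qed
  then have "{\<omega>\<in>space N. stepup_R \<alpha> n (x \<omega>) = k} \<in> sets N" for k
    by (simp add: pred_def)
  then show ?thesis
    by (simp add: measurable_count_space_eq2_countable vimage_def Int_def conj_commute)
qed

lemma (in prob_space) indep_var_prob_conj:
  assumes "indep_var S X T Y" "A \<in> sets S" "B \<in> sets T"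
  shows "prob {\<omega>\<in>space M. X \<omega> \<in> A \<and> Y \<omega> \<in> B}
       = prob {\<omega>\<in>space M. X \<omega> \<in> A} * prob {\<omega>\<in>space M. Y \<omega> \<in> B}"
proof -
  have "{\<omega>\<in>space M. X \<omega> \<in> A \<and> Y \<omega> \<in> B} = (\<lambda>\<omega>. (X \<omega>, Y \<omega>)) -` (A \<times> B) \<inter> space M"
    "{\<omega>\<in>space M. X \<omega> \<in> A} = X -` A \<inter> space M" "{\<omega>\<in>space M. Y \<omega> \<in> B} = Y -` B \<inter> space M"
    by auto
  then show ?thesis
    using indep_varD[OF assms] by simp
qed

lemma Int_stable_vimage:
  assumes "Int_stable A"
  shows "Int_stable {f -` a \<inter> \<Omega> | a. a \<in> A}"
proof (rule Int_stableI)
  fix E F assume "E \<in> {f -` a \<inter> \<Omega> | a. a \<in> A}" "F \<in> {f -` a \<inter> \<Omega> | a. a \<in> A}"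
  then obtain a b where ab: "a \<in> A" "b \<in> A" and "E = f -` a \<inter> \<Omega>" "F = f -` b \<inter> \<Omega>"
    by blast
  then have "E \<inter> F = f -` (a \<inter> b) \<inter> \<Omega>"
    by auto
  with Int_stableD[OF assms ab] show "E \<inter> F \<in> {f -` a \<inter> \<Omega> | a. a \<in> A}"
    by blast
qed

lemma (in prob_space) prob_restrict_three_blocks:
  fixes X :: "'i \<Rightarrow> 'a \<Rightarrow> 'b"
  defines "r \<equiv> \<lambda>S \<omega>. restrict (\<lambda>i. X i \<omega>) S"
  assumes IJ: "indep_var (PiM I M') (r I) (PiM J M') (r J)"
    and IJ_K: "indep_var (PiM (I \<union> J) M') (r (I \<union> J)) (PiM K M') (r K)"
    and sets: "A \<in> sets (PiM I M')" "B \<in> sets (PiM J M')" "C \<in> sets (PiM K M')"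
  shows "prob {\<omega>\<in>space M. r I \<omega> \<in> A \<and> r J \<omega> \<in> B \<and> r K \<omega> \<in> C}
       = prob {\<omega>\<in>space M. r I \<omega> \<in> A} * prob {\<omega>\<in>space M. r J \<omega> \<in> B} * prob {\<omega>\<in>space M. r K \<omega> \<in> C}"
proof -
  let ?D = "{f \<in> space (PiM (I \<union> J) M'). restrict f I \<in> A \<and> restrict f J \<in> B}"
  have "?D = ((\<lambda>f. restrict f I) -` A \<inter> space (PiM (I \<union> J) M'))
             \<inter> ((\<lambda>f. restrict f J) -` B \<inter> space (PiM (I \<union> J) M'))"
    by auto
  then have "?D \<in> sets (PiM (I \<union> J) M')"
    using sets by (auto intro!: measurable_sets[OF measurable_restrict_subset])
  moreover have "r (I \<union> J) \<omega> \<in> ?D \<longleftrightarrow> r I \<omega> \<in> A \<and> r J \<omega> \<in> B" if "\<omega> \<in> space M" for \<omega>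
  proof -
    have "restrict (r (I \<union> J) \<omega>) I = r I \<omega>" "restrict (r (I \<union> J) \<omega>) J = r J \<omega>"
      by (auto simp: r_def fun_eq_iff)
    then show ?thesis
      using measurable_space[OF indep_var_rv1[OF IJ_K] that] by simp
  qed
  ultimately have "prob {\<omega>\<in>space M. r I \<omega> \<in> A \<and> r J \<omega> \<in> B \<and> r K \<omega> \<in> C}
      = prob {\<omega>\<in>space M. r I \<omega> \<in> A \<and> r J \<omega> \<in> B} * prob {\<omega>\<in>space M. r K \<omega> \<in> C}"
    using indep_var_prob_conj[OF IJ_K _ sets(3), of ?D] by (simp cong: conj_cong)
  then show ?thesis
    using indep_var_prob_conj[OF IJ sets(1,2)] by simp
qed

lemma vimage_restrict_Un_subset_sigma_rectangles:
  fixes X :: "'i \<Rightarrow> 'a \<Rightarrow> 'b"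
  defines "r \<equiv> \<lambda>S \<omega>. restrict (\<lambda>i. X i \<omega>) S"
  assumes rv: "r J \<in> M \<rightarrow>\<^sub>M PiM J M'" "r K \<in> M \<rightarrow>\<^sub>M PiM K M'"
  shows "{r (J \<union> K) -` D \<inter> space M | D. D \<in> sets (PiM (J \<union> K) M')}
    \<subseteq> sigma_sets (space M) {(\<lambda>\<omega>. (r J \<omega>, r K \<omega>)) -` A \<inter> space M | A.
                              A \<in> {B \<times> C | B C. B \<in> sets (PiM J M') \<and> C \<in> sets (PiM K M')}}"
proof
  let ?JK = "\<lambda>\<omega>. (r J \<omega>, r K \<omega>)"
  fix E assume "E \<in> {r (J \<union> K) -` D \<inter> space M | D. D \<in> sets (PiM (J \<union> K) M')}"
  then obtain D where D: "D \<in> sets (PiM (J \<union> K) M')" and E: "E = r (J \<union> K) -` D \<inter> space M"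
    by blast
  let ?D' = "merge J K -` D \<inter> space (PiM J M' \<Otimes>\<^sub>M PiM K M')"
  have "?D' \<in> sets (PiM J M' \<Otimes>\<^sub>M PiM K M')"
    using D by measurable
  moreover have "merge J K (r J \<omega>, r K \<omega>) = r (J \<union> K) \<omega>" for \<omega>
    by (simp add: r_def merge_def fun_eq_iff)
  then have "E = ?JK -` ?D' \<inter> space M"
    using measurable_space[OF rv(1)] measurable_space[OF rv(2)]
    by (auto simp: E space_pair_measure)
  moreover have "{?JK -` A \<inter> space M | A. A \<in> sets (PiM J M' \<Otimes>\<^sub>M PiM K M')}
    = sigma_sets (space M) {?JK -` A \<inter> space M | A.
                              A \<in> {B \<times> C | B C. B \<in> sets (PiM J M') \<and> C \<in> sets (PiM K M')}}"
    unfolding sets_pair_measure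
    by (rule sigma_sets_vimage_commute) (use measurable_space[OF rv(1)] measurable_space[OF rv(2)] in auto)
  ultimately show "E \<in> sigma_sets (space M) {?JK -` A \<inter> space M | A.
                              A \<in> {B \<times> C | B C. B \<in> sets (PiM J M') \<and> C \<in> sets (PiM K M')}}"
    by blast
qed

lemma (in prob_space) indep_var_restrict_Un_right:
  fixes X :: "'i \<Rightarrow> 'a \<Rightarrow> 'b"
  defines "r \<equiv> \<lambda>S \<omega>. restrict (\<lambda>i. X i \<omega>) S"
  assumes IJ: "indep_var (PiM I M') (r I) (PiM J M') (r J)"
    and IJ_K: "indep_var (PiM (I \<union> J) M') (r (I \<union> J)) (PiM K M') (r K)"
  shows "indep_var (PiM I M') (r I) (PiM (J \<union> K) M') (r (J \<union> K))"
proof -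
  have rv [measurable]: "r I \<in> M \<rightarrow>\<^sub>M PiM I M'" "r J \<in> M \<rightarrow>\<^sub>M PiM J M'" "r K \<in> M \<rightarrow>\<^sub>M PiM K M'"
    using indep_var_rv1[OF IJ] indep_var_rv2[OF IJ] indep_var_rv2[OF IJ_K] by auto
  let ?JK = "\<lambda>\<omega>. (r J \<omega>, r K \<omega>)"
  define G where
    "G = {?JK -` A \<inter> space M | A. A \<in> {B \<times> C | B C. B \<in> sets (PiM J M') \<and> C \<in> sets (PiM K M')}}"
  have JK_sub: "{r (J \<union> K) -` D \<inter> space M | D. D \<in> sets (PiM (J \<union> K) M')} \<subseteq> sigma_sets (space M) G"
    using vimage_restrict_Un_subset_sigma_rectangles[of X J M M' K] rv(2,3)
    unfolding G_def r_def by blast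
  (* It suffices to check independence on the \<inter>-stable generator G of preimages of rectangles. *)
  have "indep_set {r I -` A \<inter> space M | A. A \<in> sets (PiM I M')} G"
  proof (rule indep_setI)
    fix E F assume "E \<in> {r I -` A \<inter> space M | A. A \<in> sets (PiM I M')}" "F \<in> G"
    then obtain A B C where ABC: "A \<in> sets (PiM I M')" "B \<in> sets (PiM J M')" "C \<in> sets (PiM K M')"
      and E: "E = {\<omega>\<in>space M. r I \<omega> \<in> A}" and F: "F = {\<omega>\<in>space M. r J \<omega> \<in> B \<and> r K \<omega> \<in> C}"
      by (auto simp: G_def)
    have "{\<omega>\<in>space M. r I \<omega> \<in> space (PiM I M') \<and> r J \<omega> \<in> B \<and> r K \<omega> \<in> C} = F"
      "{\<omega>\<in>space M. r I \<omega> \<in> space (PiM I M')} = space M"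
      using measurable_space[OF rv(1)] by (auto simp: F)
    then have "prob F = prob {\<omega>\<in>space M. r J \<omega> \<in> B} * prob {\<omega>\<in>space M. r K \<omega> \<in> C}"
      using prob_restrict_three_blocks[OF IJ[unfolded r_def] IJ_K[unfolded r_def] sets.top ABC(2,3)]
      by (simp add: r_def prob_space)
    moreover have "E \<inter> F = {\<omega>\<in>space M. r I \<omega> \<in> A \<and> r J \<omega> \<in> B \<and> r K \<omega> \<in> C}"
      by (auto simp: E F)
    ultimately show "prob (E \<inter> F) = prob E * prob F"
      using prob_restrict_three_blocks[OF IJ[unfolded r_def] IJ_K[unfolded r_def] ABC]
      by (simp add: r_def E mult.assoc)
  qed (auto simp: G_def measurable_sets)
  then have "indep_set (sigma_sets (space M) {r I -` A \<inter> space M | A. A \<in> sets (PiM I M')})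
      (sigma_sets (space M) G)"
    unfolding G_def by (intro indep_set_sigma_sets Int_stable_vimage sets.Int_stable Int_stable_pair_measure_generator)
  moreover have "sigma_sets (space M) {r (J \<union> K) -` D \<inter> space M | D. D \<in> sets (PiM (J \<union> K) M')}
      \<subseteq> sigma_sets (space M) G"
    by (rule sigma_sets_mono[OF JK_sub])
  ultimately have "indep_set (sigma_sets (space M) {r I -` A \<inter> space M | A. A \<in> sets (PiM I M')})
      (sigma_sets (space M) {r (J \<union> K) -` D \<inter> space M | D. D \<in> sets (PiM (J \<union> K) M')})"
    unfolding indep_sets2_eq by blast
  moreover have "(\<lambda>\<omega>. merge J K (r J \<omega>, r K \<omega>)) \<in> M \<rightarrow>\<^sub>M PiM (J \<union> K) M'"
    by measurable
  moreover have "(\<lambda>\<omega>. merge J K (r J \<omega>, r K \<omega>)) = r (J \<union> K)"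
    by (simp add: r_def merge_def fun_eq_iff)
  ultimately show ?thesis
    unfolding indep_var_eq using rv(1) by simp
qed

lemma (in prob_space) expectation_crit_div:
  fixes X :: "'a \<Rightarrow> real" and K :: "'a \<Rightarrow> nat"
  assumes [measurable]: "X \<in> borel_measurable M" "K \<in> M \<rightarrow>\<^sub>M count_space UNIV"
    and indep: "\<And>t k. prob {\<omega>\<in>space M. X \<omega> \<le> t \<and> K \<omega> = k}
                     = prob {\<omega>\<in>space M. X \<omega> \<le> t} * prob {\<omega>\<in>space M. K \<omega> = k}"
    and K_range: "\<And>\<omega>. \<omega> \<in> space M \<Longrightarrow> K \<omega> \<in> {1..n}"
    and cdf: "\<And>k. k \<in> {1..n} \<Longrightarrow> prob {\<omega>\<in>space M. X \<omega> \<le> crit \<alpha> n k} = \<gamma> * crit \<alpha> n k"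
  shows "integrable M (\<lambda>\<omega>. of_bool (X \<omega> \<le> crit \<alpha> n (K \<omega>)) / real (K \<omega>))"
    and "(\<integral>\<omega>. of_bool (X \<omega> \<le> crit \<alpha> n (K \<omega>)) / real (K \<omega>) \<partial>M) = \<gamma> * \<alpha> / real n"
proof -
  define E where "E k = {\<omega>\<in>space M. X \<omega> \<le> crit \<alpha> n k \<and> K \<omega> = k}" for k
  have E_sets: "E k \<in> events" for k
    unfolding E_def by measurable
  have split: "of_bool (X \<omega> \<le> crit \<alpha> n (K \<omega>)) / real (K \<omega>) = (\<Sum>k\<in>{1..n}. indicator (E k) \<omega> / real k)"
    if "\<omega> \<in> space M" for \<omega>
  proof -
    have "(\<Sum>k\<in>{1..n}. indicator (E k) \<omega> / real k)
        = (\<Sum>k\<in>{1..n}. if k = K \<omega> then of_bool (X \<omega> \<le> crit \<alpha> n k) / real k else 0)"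
      using that by (intro sum.cong) (auto simp: E_def indicator_def)
    then show ?thesis
      using K_range[OF that] by simp
  qed
  have integrable_E: "integrable M (\<lambda>\<omega>. indicator (E k) \<omega> / real k)" for k
    using E_sets by (auto simp: less_top[symmetric])
  then show "integrable M (\<lambda>\<omega>. of_bool (X \<omega> \<le> crit \<alpha> n (K \<omega>)) / real (K \<omega>))"
    by (subst Bochner_Integration.integrable_cong[OF refl split]) auto
  have "(\<integral>\<omega>. of_bool (X \<omega> \<le> crit \<alpha> n (K \<omega>)) / real (K \<omega>) \<partial>M)
      = (\<integral>\<omega>. (\<Sum>k\<in>{1..n}. indicator (E k) \<omega> / real k) \<partial>M)"
    by (rule Bochner_Integration.integral_cong) (simp_all add: split)
  also have "\<dots> = (\<Sum>k\<in>{1..n}. prob (E k) / real k)"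
    using integrable_E E_sets by (simp add: Int_absorb2 sets.sets_into_space)
  also have "\<dots> = \<gamma> * \<alpha> / real n * (\<Sum>k\<in>{1..n}. prob {\<omega>\<in>space M. K \<omega> = k})"
    unfolding sum_distrib_left
  proof (rule sum.cong)
    fix k :: nat assume k: "k \<in> {1..n}"
    have "prob (E k) / real k = \<gamma> * crit \<alpha> n k * prob {\<omega>\<in>space M. K \<omega> = k} / real k"
      by (simp add: E_def indep cdf[OF k])
    also have "\<dots> = \<gamma> * (crit \<alpha> n k / real k) * prob {\<omega>\<in>space M. K \<omega> = k}"
      by simp
    also have "\<dots> = \<gamma> * \<alpha> / real n * prob {\<omega>\<in>space M. K \<omega> = k}"
      using k by (simp add: crit_div)
    finally show "prob (E k) / real k = \<gamma> * \<alpha> / real n * prob {\<omega>\<in>space M. K \<omega> = k}" .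
  qed simp
  also have "(\<Sum>k\<in>{1..n}. prob {\<omega>\<in>space M. K \<omega> = k}) = prob (\<Union>k\<in>{1..n}. {\<omega>\<in>space M. K \<omega> = k})"
    by (rule finite_measure_finite_Union[symmetric]) (auto simp: disjoint_family_on_def)
  also have "(\<Union>k\<in>{1..n}. {\<omega>\<in>space M. K \<omega> = k}) = space M"
    using K_range by auto
  finally show "(\<integral>\<omega>. of_bool (X \<omega> \<le> crit \<alpha> n (K \<omega>)) / real (K \<omega>) \<partial>M) = \<gamma> * \<alpha> / real n"
    by (simp add: prob_space)
qed

lemma (in prob_space) prob_indep_stepup_R_fun_upd_zero:
  fixes \<xi> :: "nat \<Rightarrow> 'a \<Rightarrow> real"
  assumes indep: "indep_var (PiM {i} (\<lambda>_. borel)) (\<lambda>\<omega>. restrict (\<lambda>j. \<xi> j \<omega>) {i})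
      (PiM ({1..n} - {i}) (\<lambda>_. borel)) (\<lambda>\<omega>. restrict (\<lambda>j. \<xi> j \<omega>) ({1..n} - {i}))"
  shows "prob {\<omega>\<in>space M. \<xi> i \<omega> \<le> t \<and> stepup_R \<alpha> n ((\<lambda>j. \<xi> j \<omega>)(i := 0)) = k}
       = prob {\<omega>\<in>space M. \<xi> i \<omega> \<le> t} * prob {\<omega>\<in>space M. stepup_R \<alpha> n ((\<lambda>j. \<xi> j \<omega>)(i := 0)) = k}"
proof -
  let ?L = "{1..n} - {i}"
  have "(\<lambda>f. stepup_R \<alpha> n (f(i := 0))) \<in> PiM ?L (\<lambda>_. borel) \<rightarrow>\<^sub>M count_space UNIV"
  proof (rule measurable_stepup_R)
    fix j :: nat assume "j \<in> {1..n}"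
    then show "(\<lambda>f. (f(i := 0)) j) \<in> borel_measurable (PiM ?L (\<lambda>_. borel))"
      by (cases "j = i") auto
  qed
  from measurable_sets[OF this, of "{k}"]
  have R_set: "{f \<in> space (PiM ?L (\<lambda>_. borel)). stepup_R \<alpha> n (f(i := 0)) = k} \<in> sets (PiM ?L (\<lambda>_. borel))"
    by (simp add: vimage_def Int_def conj_commute)
  have t_set: "{f \<in> space (PiM {i} (\<lambda>_. borel)). f i \<le> t} \<in> sets (PiM {i} (\<lambda>_. borel :: real measure))"
    by measurable
  have "stepup_R \<alpha> n ((restrict (\<lambda>j. \<xi> j \<omega>) ?L)(i := 0)) = stepup_R \<alpha> n ((\<lambda>j. \<xi> j \<omega>)(i := 0))" for \<omega>
    by (rule stepup_R_cong) auto
  then show ?thesis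
    using indep_var_prob_conj[OF indep t_set R_set] by (simp add: space_PiM)
qed

theorem lemma2p2:
  fixes M :: "'a measure" and \<xi> :: "nat \<Rightarrow> 'a \<Rightarrow> real"
    and \<alpha> \<gamma> :: real and n0 n :: nat
  assumes P: "prob_space M"
    and alpha: "0 < \<alpha>" "\<alpha> < 1"
    and gamma: "0 \<le> \<gamma>" "\<gamma> \<le> 1 / \<alpha>"
    and n0n: "n0 \<le> n"
    and rv: "\<And>i. i \<in> {1..n} \<Longrightarrow> \<xi> i \<in> borel_measurable M"
    and range01: "\<And>i \<omega>. i \<in> {1..n} \<Longrightarrow> \<omega> \<in> space M \<Longrightarrow> \<xi> i \<omega> \<in> {0..1}"
    and indep_null: "prob_space.indep_vars M (\<lambda>_. borel) \<xi> {1..n0}"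
    and ident: "\<And>i j. i \<in> {1..n0} \<Longrightarrow> j \<in> {1..n0} \<Longrightarrow>
                 distr M borel (\<xi> i) = distr M borel (\<xi> j)"
    and cdf: "\<And>i t. i \<in> {1..n0} \<Longrightarrow> t \<in> {0..\<alpha>} \<Longrightarrow>
                 measure M {\<omega> \<in> space M. \<xi> i \<omega> \<le> t} = \<gamma> * t"
    and indep_groups: "prob_space.indep_var M
          (PiM {1..n0} (\<lambda>_. borel)) (\<lambda>\<omega>. restrict (\<lambda>i. \<xi> i \<omega>) {1..n0})
          (PiM {n0<..n} (\<lambda>_. borel)) (\<lambda>\<omega>. restrict (\<lambda>i. \<xi> i \<omega>) {n0<..n})"
  shows "(\<integral>\<omega>. real (stepup_V \<alpha> n0 n (\<lambda>i. \<xi> i \<omega>))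
              / real (max (stepup_R \<alpha> n (\<lambda>i. \<xi> i \<omega>)) 1) \<partial>M)
         = real n0 / real n * \<gamma> * \<alpha>"
proof -
  interpret prob_space M by (rule P)
  let ?R = "\<lambda>i \<omega>. stepup_R \<alpha> n ((\<lambda>j. \<xi> j \<omega>)(i := 0))"
  let ?F = "\<lambda>i \<omega>. of_bool (\<xi> i \<omega> \<le> crit \<alpha> n (?R i \<omega>)) / real (?R i \<omega>)"
  have null_term: "integrable M (?F i) \<and> integral\<^sup>L M (?F i) = \<gamma> * \<alpha> / real n" if i: "i \<in> {1..n0}" for i
  proof -
    have "{i} \<union> ({1..n0} - {i}) = {1..n0}" "({1..n0} - {i}) \<union> {n0<..n} = {1..n} - {i}"
      using i n0n by auto
    then have "indep_var (PiM {i} (\<lambda>_. borel)) (\<lambda>\<omega>. restrict (\<lambda>j. \<xi> j \<omega>) {i})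
        (PiM ({1..n} - {i}) (\<lambda>_. borel)) (\<lambda>\<omega>. restrict (\<lambda>j. \<xi> j \<omega>) ({1..n} - {i}))"
      using indep_var_restrict_Un_right[of "{i}" "\<lambda>_. borel" \<xi> "{1..n0} - {i}" "{n0<..n}"]
        indep_var_restrict[OF indep_null, of "{i}" "{1..n0} - {i}"] indep_groups i by auto
    moreover have "?R i \<in> M \<rightarrow>\<^sub>M count_space UNIV"
      using rv by (intro measurable_stepup_R) (auto simp: fun_upd_def)
    moreover have "\<xi> i \<in> borel_measurable M" "?R i \<omega> \<in> {1..n}" for \<omega>
      using rv i n0n alpha(1) stepup_R_fun_upd_zero_in by auto
    moreover have "crit \<alpha> n k \<in> {0..\<alpha>}" if "k \<in> {1..n}" for k
      using that alpha(1) by (auto simp: crit_def field_simps)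
    ultimately show ?thesis
      using expectation_crit_div[of "\<xi> i" "?R i" n \<alpha> \<gamma>] prob_indep_stepup_R_fun_upd_zero cdf[OF i]
      by blast
  qed
  have "(\<integral>\<omega>. real (stepup_V \<alpha> n0 n (\<lambda>i. \<xi> i \<omega>)) / real (max (stepup_R \<alpha> n (\<lambda>i. \<xi> i \<omega>)) 1) \<partial>M)
      = (\<integral>\<omega>. (\<Sum>i\<in>{1..n0}. ?F i \<omega>) \<partial>M)"
    using stepup_V_div_eq_sum[OF less_imp_le[OF alpha(1)] n0n] by simp
  also have "\<dots> = (\<Sum>i\<in>{1..n0}. \<gamma> * \<alpha> / real n)"
    using null_term by (simp add: Bochner_Integration.integral_sum)
  finally show ?thesis
    by simp
qed

end
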